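(* Let $T^r$ be a rooted binary phylogenetic tree on taxon set $X$ with $n=|X|$, whose edges $e$ carry real edge lengths $\lambda_e$. If $T^r$ is ultrametric, then the rankings of the taxa induced by the original Shapley Value $SV_{T^r}$ and by the modified Shapley Value $\widetilde{SV}_{T^r}$ are identical; that is, for all $a,b\in X$, $$SV_{T^r}(a)\ge SV_{T^r}(b)\iff \widetilde{SV}_{T^r}(a)\ge \widetilde{SV}_{T^r}(b).$$
   Context: A rooted binary phylogenetic tree on $X$ is a tree whose leaves are bijectively labelled by $X$, in which every internal vertex has degree 3 except a distinguished root vertex $\rho$ of degree 2. It is ultrametric if the path length (sum of edge lengths) from every leaf to the root is the same. For $S\subseteq X$, the rooted phylogenetic diversity $PD^r(S)$ is the sum of the edge lengths of the smallest subtree of $T^r$ containing all leaves in $S$ and the root (with $PD^r(\emptyset)=0$). The original Shapley Value of $a\in X$ is $$SV_{T^r}(a)=\frac{1}{n!}\sum_{S\subseteq X,\ a\in S}(|S|-1)!\,(n-|S|)!\,\bigl(PD^r(S)-PD^r(S\setminus\{a\})\bigr),$$ and the modified Shapley Value is the same sum restricted to subsets with $|S|\ge 2$: $$\widetilde{SV}_{T^r}(a)=\frac{1}{n!}\sum_{S\subseteq X,\ a\in S,\ |S|\ge 2}(|S|-1)!\,(n-|S|)!\,\bigl(PD^r(S)-PD^r(S\setminus\{a\})\bigr).$$ A function $f:X\to\mathbb{R}$ induces the ranking ordering the taxa in decreasing order of $f$ (taxon $x$ is placed before $y$ precisely if $f(x)\ge f(y)$). *)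

theory Defs
  imports Complex_Main
begin

text \<open>A rooted tree is represented as a finite digraph with vertex set V, edge set E
  (edges directed away from the root, (parent, child)), root rho; the leaves are labelled
  by the injective map leaf from the taxon set X; edge lengths are lambda.\<close>

definition indeg :: "('v \<times> 'v) set \<Rightarrow> 'v \<Rightarrow> nat" where
  "indeg E v = card {u. (u, v) \<in> E}"

definition outdeg :: "('v \<times> 'v) set \<Rightarrow> 'v \<Rightarrow> nat" where
  "outdeg E v = card {w. (v, w) \<in> E}"

definition rooted_binary_phylo_tree ::
  "'v set \<Rightarrow> ('v \<times> 'v) set \<Rightarrow> 'v \<Rightarrow> 'a set \<Rightarrow> ('a \<Rightarrow> 'v) \<Rightarrow> bool" where
  "rooted_binary_phylo_tree V E rho X leaf \<longleftrightarrow>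
     finite V \<and> E \<subseteq> V \<times> V \<and> rho \<in> V \<and>
     indeg E rho = 0 \<and> (\<forall>v\<in>V. v \<noteq> rho \<longrightarrow> indeg E v = 1) \<and>
     (\<forall>v\<in>V. (rho, v) \<in> E\<^sup>*) \<and>
     outdeg E rho = 2 \<and>
     (\<forall>v\<in>V. v \<noteq> rho \<longrightarrow> outdeg E v = 0 \<or> outdeg E v = 2) \<and>
     bij_betw leaf X {v \<in> V. v \<noteq> rho \<and> outdeg E v = 0}"

definition path_edges :: "('v \<times> 'v) set \<Rightarrow> ('a \<Rightarrow> 'v) \<Rightarrow> 'a \<Rightarrow> ('v \<times> 'v) set" where
  "path_edges E leaf x = {e \<in> E. (snd e, leaf x) \<in> E\<^sup>*}"

definition ultrametric ::
  "('v \<times> 'v) set \<Rightarrow> 'a set \<Rightarrow> ('a \<Rightarrow> 'v) \<Rightarrow> (('v \<times> 'v) \<Rightarrow> real) \<Rightarrow> bool" where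
  "ultrametric E X leaf lambda \<longleftrightarrow>
     (\<forall>x\<in>X. \<forall>y\<in>X. (\<Sum>e\<in>path_edges E leaf x. lambda e) = (\<Sum>e\<in>path_edges E leaf y. lambda e))"

text \<open>Rooted phylogenetic diversity: total length of the edges of the smallest subtree
  containing the root and the leaves in S (= union of root-to-leaf paths).\<close>
definition PDr ::
  "('v \<times> 'v) set \<Rightarrow> ('a \<Rightarrow> 'v) \<Rightarrow> (('v \<times> 'v) \<Rightarrow> real) \<Rightarrow> 'a set \<Rightarrow> real" where
  "PDr E leaf lambda S = (\<Sum>e\<in>(\<Union>x\<in>S. path_edges E leaf x). lambda e)"

definition SV ::
  "('v \<times> 'v) set \<Rightarrow> 'a set \<Rightarrow> ('a \<Rightarrow> 'v) \<Rightarrow> (('v \<times> 'v) \<Rightarrow> real) \<Rightarrow> 'a \<Rightarrow> real" where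
  "SV E X leaf lambda a =
     (1 / fact (card X)) *
     (\<Sum>S\<in>{S. S \<subseteq> X \<and> a \<in> S}.
        fact (card S - 1) * fact (card X - card S) *
        (PDr E leaf lambda S - PDr E leaf lambda (S - {a})))"

definition SV_mod ::
  "('v \<times> 'v) set \<Rightarrow> 'a set \<Rightarrow> ('a \<Rightarrow> 'v) \<Rightarrow> (('v \<times> 'v) \<Rightarrow> real) \<Rightarrow> 'a \<Rightarrow> real" where
  "SV_mod E X leaf lambda a =
     (1 / fact (card X)) *
     (\<Sum>S\<in>{S. S \<subseteq> X \<and> a \<in> S \<and> card S \<ge> 2}.
        fact (card S - 1) * fact (card X - card S) *
        (PDr E leaf lambda S - PDr E leaf lambda (S - {a})))"

end

theory Submission
  imports Defs
begin

text \<open>The two Shapley values differ only in the singleton coalition \<open>{a}\<close>, whose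
  contribution is the length of the root-to-\<open>a\<close> path divided by \<open>|X|\<close>.  On an
  ultrametric tree this path length is the same for every taxon, so the two values differ
  by a common constant and induce the same ranking.\<close>

lemma coalitions_containing_eq_insert_singleton:
  assumes "finite X" and "a \<in> X"
  shows "{S. S \<subseteq> X \<and> a \<in> S} = insert {a} {S. S \<subseteq> X \<and> a \<in> S \<and> card S \<ge> 2}"
proof (intro set_eqI iffI)
  fix S assume S: "S \<in> {S. S \<subseteq> X \<and> a \<in> S}"
  then have "finite S" "S \<noteq> {}" using assms(1) finite_subset by auto
  then have "card S = 1 \<or> card S \<ge> 2" using card_gt_0_iff[of S] by linarith
  then show "S \<in> insert {a} {S. S \<subseteq> X \<and> a \<in> S \<and> card S \<ge> 2}"
    using S by (auto simp: card_1_singleton_iff)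
qed (use assms(2) in auto)

lemma SV_eq_SV_mod_plus_path_length:
  assumes "finite X" and "a \<in> X"
  shows "SV E X leaf lambda a =
         SV_mod E X leaf lambda a + (\<Sum>e\<in>path_edges E leaf a. lambda e) / card X"
proof -
  let ?n = "card X"
  let ?f = "\<lambda>S. fact (card S - 1) * fact (?n - card S) *
                 (PDr E leaf lambda S - PDr E leaf lambda (S - {a})) :: real"
  let ?B = "{S. S \<subseteq> X \<and> a \<in> S \<and> card S \<ge> 2}"
  have "finite ?B"
    using assms(1) by (auto intro: finite_subset[of _ "Pow X"])
  then have "sum ?f {S. S \<subseteq> X \<and> a \<in> S} = ?f {a} + sum ?f ?B"
    by (simp add: coalitions_containing_eq_insert_singleton[OF assms])
  moreover have "?f {a} = fact (?n - 1) * (\<Sum>e\<in>path_edges E leaf a. lambda e)"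
    by (simp add: PDr_def)
  moreover have "fact (?n - 1) / fact ?n = (1 / ?n :: real)"
    using assms card_gt_0_iff[of X] by (cases ?n) auto
  ultimately show ?thesis
    unfolding SV_def SV_mod_def by (simp add: field_simps)
qed

lemma rooted_binary_phylo_tree_finite_taxa:
  assumes "rooted_binary_phylo_tree V E rho X leaf"
  shows "finite X"
proof -
  have "bij_betw leaf X {v \<in> V. v \<noteq> rho \<and> outdeg E v = 0}" "finite V"
    using assms unfolding rooted_binary_phylo_tree_def by blast+
  then show ?thesis
    using bij_betw_finite by fastforce
qed

theorem proposition1:
  fixes V :: "'v set" and E :: "('v \<times> 'v) set" and rho :: 'v
    and X :: "'a set" and leaf :: "'a \<Rightarrow> 'v" and lambda :: "('v \<times> 'v) \<Rightarrow> real"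
  assumes "rooted_binary_phylo_tree V E rho X leaf"
    and "ultrametric E X leaf lambda"
    and "a \<in> X" and "b \<in> X"
  shows "SV E X leaf lambda a \<ge> SV E X leaf lambda b \<longleftrightarrow>
         SV_mod E X leaf lambda a \<ge> SV_mod E X leaf lambda b"
proof -
  have fin: "finite X"
    using assms(1) by (rule rooted_binary_phylo_tree_finite_taxa)
  have "(\<Sum>e\<in>path_edges E leaf a. lambda e) = (\<Sum>e\<in>path_edges E leaf b. lambda e)"
    using assms(2-4) unfolding ultrametric_def by blast
  then show ?thesis
    using SV_eq_SV_mod_plus_path_length[OF fin assms(3), of E leaf lambda]
      SV_eq_SV_mod_plus_path_length[OF fin assms(4), of E leaf lambda]
    by simp
qed

end
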